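(* The group $\mathrm{Sym}(\mathbb{Z})\rtimes\mathbb{Z}$ does not have Shalom's property $H_{\mathrm{FD}}$.
   Context: $\mathrm{Sym}(\mathbb{Z})$ is the group of finitely supported permutations of $\mathbb{Z}$, and $\mathbb{Z}$ acts on it by conjugation by the shift $x\mapsto x+1$; the group is generated by the shift and the transposition of $0$ and $1$. A finitely generated group has property $H_{\mathrm{FD}}$ if every unitary representation with nonzero first reduced cohomology (1-cocycles modulo the closure, for pointwise convergence, of 1-coboundaries) admits a nonzero finite-dimensional subrepresentation. *)

theory Defs
  imports "HOL-Algebra.Group" Complex_Main
begin

definition fin_perm_Z :: "(int \<Rightarrow> int) set" where
  "fin_perm_Z = {\<sigma>. bij \<sigma> \<and> finite {x. \<sigma> x \<noteq> x}}"

text \<open>Action of n in Z by conjugation with the n-th power of the shift s(x) = x+1: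
  s^n o sigma o s^(-n).\<close>
definition shift_conj :: "int \<Rightarrow> (int \<Rightarrow> int) \<Rightarrow> (int \<Rightarrow> int)" where
  "shift_conj n \<sigma> = (\<lambda>x. \<sigma> (x - n) + n)"

definition SymZ_rtimes_Z :: "((int \<Rightarrow> int) \<times> int) monoid" where
  "SymZ_rtimes_Z =
     \<lparr> carrier = fin_perm_Z \<times> UNIV,
       mult = (\<lambda>(\<sigma>, m) (\<tau>, n). (\<sigma> \<circ> shift_conj m \<tau>, m + n)),
       one = (id, 0) \<rparr>"

definition l2 :: "(nat \<Rightarrow> complex) set" where
  "l2 = {x. summable (\<lambda>n. (cmod (x n))\<^sup>2)}"

definition l2_inner :: "(nat \<Rightarrow> complex) \<Rightarrow> (nat \<Rightarrow> complex) \<Rightarrow> complex" where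
  "l2_inner x y = (\<Sum>n. x n * cnj (y n))"

definition l2_norm :: "(nat \<Rightarrow> complex) \<Rightarrow> real" where
  "l2_norm x = sqrt (\<Sum>n. (cmod (x n))\<^sup>2)"

definition unitary_op :: "((nat \<Rightarrow> complex) \<Rightarrow> (nat \<Rightarrow> complex)) \<Rightarrow> bool" where
  "unitary_op U \<longleftrightarrow>
     U ` l2 = l2 \<and>
     (\<forall>x\<in>l2. \<forall>y\<in>l2. \<forall>c::complex. U (\<lambda>n. c * x n + y n) = (\<lambda>n. c * U x n + U y n)) \<and>
     (\<forall>x\<in>l2. \<forall>y\<in>l2. l2_inner (U x) (U y) = l2_inner x y)"

definition unitary_rep :: "('g, 'b) monoid_scheme \<Rightarrow> ('g \<Rightarrow> (nat \<Rightarrow> complex) \<Rightarrow> (nat \<Rightarrow> complex)) \<Rightarrow> bool" where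
  "unitary_rep G \<pi> \<longleftrightarrow>
     (\<forall>g\<in>carrier G. unitary_op (\<pi> g)) \<and>
     (\<forall>g\<in>carrier G. \<forall>h\<in>carrier G. \<forall>x\<in>l2. \<pi> (g \<otimes>\<^bsub>G\<^esub> h) x = \<pi> g (\<pi> h x)) \<and>
     (\<forall>x\<in>l2. \<pi> \<one>\<^bsub>G\<^esub> x = x)"

definition cocycle :: "('g, 'b) monoid_scheme \<Rightarrow> ('g \<Rightarrow> (nat \<Rightarrow> complex) \<Rightarrow> (nat \<Rightarrow> complex)) \<Rightarrow> ('g \<Rightarrow> nat \<Rightarrow> complex) \<Rightarrow> bool" where
  "cocycle G \<pi> b \<longleftrightarrow>
     (\<forall>g\<in>carrier G. b g \<in> l2) \<and>
     (\<forall>g\<in>carrier G. \<forall>h\<in>carrier G. b (g \<otimes>\<^bsub>G\<^esub> h) = (\<lambda>n. b g n + \<pi> g (b h) n))"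

definition coboundary :: "('g \<Rightarrow> (nat \<Rightarrow> complex) \<Rightarrow> (nat \<Rightarrow> complex)) \<Rightarrow> (nat \<Rightarrow> complex) \<Rightarrow> 'g \<Rightarrow> nat \<Rightarrow> complex" where
  "coboundary \<pi> v g = (\<lambda>n. \<pi> g v n - v n)"

text \<open>b lies in the closure of the coboundaries for the topology of pointwise convergence
  on G (basic neighbourhoods: finitely many group elements, norm-ball of radius eps).\<close>
definition in_closure_coboundaries :: "('g, 'b) monoid_scheme \<Rightarrow> ('g \<Rightarrow> (nat \<Rightarrow> complex) \<Rightarrow> (nat \<Rightarrow> complex)) \<Rightarrow> ('g \<Rightarrow> nat \<Rightarrow> complex) \<Rightarrow> bool" where
  "in_closure_coboundaries G \<pi> b \<longleftrightarrow>
     (\<forall>F (\<epsilon>::real). finite F \<and> F \<subseteq> carrier G \<and> \<epsilon> > 0 \<longrightarrow>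
        (\<exists>v\<in>l2. \<forall>g\<in>F. l2_norm (\<lambda>n. b g n - coboundary \<pi> v g n) < \<epsilon>))"

definition reduced_H1_nonzero :: "('g, 'b) monoid_scheme \<Rightarrow> ('g \<Rightarrow> (nat \<Rightarrow> complex) \<Rightarrow> (nat \<Rightarrow> complex)) \<Rightarrow> bool" where
  "reduced_H1_nonzero G \<pi> \<longleftrightarrow> (\<exists>b. cocycle G \<pi> b \<and> \<not> in_closure_coboundaries G \<pi> b)"

definition cspan :: "(nat \<Rightarrow> complex) set \<Rightarrow> (nat \<Rightarrow> complex) set" where
  "cspan S = {x. \<exists>c :: (nat \<Rightarrow> complex) \<Rightarrow> complex. x = (\<lambda>n. \<Sum>s\<in>S. c s * s n)}"

definition has_fd_subrep :: "('g, 'b) monoid_scheme \<Rightarrow> ('g \<Rightarrow> (nat \<Rightarrow> complex) \<Rightarrow> (nat \<Rightarrow> complex)) \<Rightarrow> bool" where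
  "has_fd_subrep G \<pi> \<longleftrightarrow>
     (\<exists>S. finite S \<and> S \<subseteq> l2 \<and> (\<exists>s\<in>S. s \<noteq> (\<lambda>n. 0)) \<and>
          (\<forall>g\<in>carrier G. \<forall>x\<in>cspan S. \<pi> g x \<in> cspan S))"

text \<open>Property H_FD, tested on unitary representations on the separable Hilbert space l2(N).\<close>
definition has_HFD_l2 :: "('g, 'b) monoid_scheme \<Rightarrow> bool" where
  "has_HFD_l2 G \<longleftrightarrow>
     (\<forall>\<pi>. unitary_rep G \<pi> \<and> reduced_H1_nonzero G \<pi> \<longrightarrow> has_fd_subrep G \<pi>)"

end

theory Submission
  imports Defs "HOL-Analysis.Infinite_Sum" "HOL-Library.Nat_Bijection" "HOL-Library.Function_Algebras"
    "HOL-Combinatorics.Transposition"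
begin

text \<open>The counterexample is the quasi-regular representation \<open>\<pi>\<close> of \<open>G = Sym(\<int>) \<rtimes> \<int>\<close> on
  \<open>\<ell>\<^sup>2(\<int>)\<close>, with \<open>\<int>\<close> enumerated as \<open>\<nat>\<close>. Let \<open>\<zeta>\<close> be the identity of \<open>\<int>\<close> with the points
  \<open>0\<close> and \<open>1\<close> merged. It is not square summable, but \<open>g \<mapsto> \<pi>(g)\<zeta> - \<zeta> + m\<^sub>g\<close>, where \<open>m\<^sub>g\<close> is
  the translation part of \<open>g\<close>, is an \<open>\<ell>\<^sup>2\<close>-valued cocycle. Coboundaries vanish at the fixed
  points of \<open>g\<close>, while this cocycle takes the value \<open>1\<close> at the point \<open>0\<close>, which is fixed by
  \<open>((0 1), 1)\<close>; so it is not even approximately a coboundary. On the other hand, if a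
  finite-dimensional invariant subspace contained some \<open>f \<noteq> 0\<close>, say \<open>f(a) \<noteq> 0\<close>, then it would
  contain \<open>f \<circ> (a b) - f\<close>, a multiple of \<open>\<delta>\<^sub>a - \<delta>\<^sub>b\<close>, for the infinitely many \<open>b\<close> with
  \<open>f(b) \<noteq> f(a)\<close>; these vectors are linearly independent.\<close>

lemma summable_norm_reindex_bij:
  fixes f :: "nat \<Rightarrow> 'a::banach"
  assumes P: "bij P" and s: "summable (\<lambda>n. norm (f n))"
  shows "summable (\<lambda>n. norm (f (P n)))"
proof -
  have "(\<lambda>n. norm (f n)) summable_on UNIV"
    using summable_on_UNIV_nonneg_real_iff[of "\<lambda>n. norm (f n)"] s by simp
  hence "(\<lambda>n. norm (f (P n))) summable_on UNIV"
    using summable_on_reindex_bij_betw[OF P, of "\<lambda>n. norm (f n)"] by simp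
  thus ?thesis using summable_on_UNIV_nonneg_real_iff[of "\<lambda>n. norm (f (P n))"] by simp
qed

lemma suminf_reindex_bij:
  fixes f :: "nat \<Rightarrow> 'a::banach"
  assumes P: "bij P" and s: "summable (\<lambda>n. norm (f n))"
  shows "(\<Sum>n. f (P n)) = (\<Sum>n. f n)"
proof -
  have sP: "summable (\<lambda>n. norm (f (P n)))" by (rule summable_norm_reindex_bij[OF P s])
  have "(\<Sum>n. f (P n)) = infsum (\<lambda>n. f (P n)) UNIV"
    by (rule infsumI[symmetric], rule norm_summable_imp_has_sum[OF sP])
       (rule summable_sums[OF summable_norm_cancel[OF sP]])
  also have "\<dots> = infsum f UNIV" by (rule infsum_reindex_bij_betw[OF P])
  also have "\<dots> = (\<Sum>n. f n)"
    by (rule infsumI, rule norm_summable_imp_has_sum[OF s])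
       (rule summable_sums[OF summable_norm_cancel[OF s]])
  finally show ?thesis .
qed

lemma l2_reindex_bij:
  assumes "bij P" and "x \<in> l2"
  shows "(\<lambda>n. x (P n)) \<in> l2"
  using summable_norm_reindex_bij[OF assms(1), of "\<lambda>n. (cmod (x n))\<^sup>2"] assms(2)
  by (simp add: l2_def)

lemma summable_norm_mult_cnj_l2:
  assumes "x \<in> l2" and "y \<in> l2"
  shows "summable (\<lambda>n. norm (x n * cnj (y n)))"
proof (rule summable_comparison_test'[where N = 0])
  show "summable (\<lambda>n. (cmod (x n))\<^sup>2 + (cmod (y n))\<^sup>2)"
    using assms by (simp add: l2_def summable_add)
  show "norm (norm (x n * cnj (y n))) \<le> (cmod (x n))\<^sup>2 + (cmod (y n))\<^sup>2" for n
  proof -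
    have "0 \<le> cmod (x n) * cmod (y n)" by simp
    moreover have "2 * cmod (x n) * cmod (y n) \<le> (cmod (x n))\<^sup>2 + (cmod (y n))\<^sup>2"
      by (rule sum_squares_bound)
    ultimately have "cmod (x n) * cmod (y n) \<le> (cmod (x n))\<^sup>2 + (cmod (y n))\<^sup>2" by linarith
    thus ?thesis by (simp add: norm_mult)
  qed
qed

lemma l2_diff:
  assumes "x \<in> l2" and "y \<in> l2"
  shows "(\<lambda>n. x n - y n) \<in> l2"
proof -
  have "summable (\<lambda>n. (cmod (x n - y n))\<^sup>2)"
  proof (rule summable_comparison_test'[where N = 0])
    show "summable (\<lambda>n. 2 * (cmod (x n))\<^sup>2 + 2 * (cmod (y n))\<^sup>2)"
      using assms by (simp add: l2_def summable_add summable_mult)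
    show "norm ((cmod (x n - y n))\<^sup>2) \<le> 2 * (cmod (x n))\<^sup>2 + 2 * (cmod (y n))\<^sup>2" for n
    proof -
      have "norm ((cmod (x n - y n))\<^sup>2) \<le> (cmod (x n) + cmod (y n))\<^sup>2"
        by (simp add: power_mono norm_triangle_ineq4)
      also have "\<dots> \<le> 2 * (cmod (x n))\<^sup>2 + 2 * (cmod (y n))\<^sup>2"
        using sum_squares_bound[of "cmod (x n)" "cmod (y n)"] by (simp add: power2_sum)
      finally show ?thesis .
    qed
  qed
  thus ?thesis by (simp add: l2_def)
qed

lemma l2_norm_ge_component:
  assumes "x \<in> l2"
  shows "cmod (x k) \<le> l2_norm x"
proof -
  have "(\<Sum>n\<in>{k}. (cmod (x n))\<^sup>2) \<le> (\<Sum>n. (cmod (x n))\<^sup>2)"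
    using assms by (intro sum_le_suminf) (auto simp: l2_def)
  thus ?thesis unfolding l2_norm_def by (intro real_le_rsqrt) simp
qed

lemma l2_finite_level_set:
  assumes "x \<in> l2" and "c \<noteq> 0"
  shows "finite {n. x n = c}"
proof -
  have "(\<lambda>n. (cmod (x n))\<^sup>2) \<longlonglongrightarrow> 0"
    using assms(1) by (intro summable_LIMSEQ_zero) (simp add: l2_def)
  moreover have "(cmod c)\<^sup>2 > 0" using assms(2) by simp
  ultimately have "eventually (\<lambda>n. (cmod (x n))\<^sup>2 < (cmod c)\<^sup>2) sequentially"
    by (rule order_tendstoD(2))
  then obtain N where N: "\<And>n. n \<ge> N \<Longrightarrow> (cmod (x n))\<^sup>2 < (cmod c)\<^sup>2"
    by (auto simp: eventually_sequentially)
  have "{n. x n = c} \<subseteq> {..<N}"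
  proof
    fix n assume "n \<in> {n. x n = c}"
    thus "n \<in> {..<N}" using N[of n] by (cases "n \<ge> N") auto
  qed
  thus ?thesis by (rule finite_subset) simp
qed

definition perm_rep :: "('g \<Rightarrow> nat \<Rightarrow> nat) \<Rightarrow> 'g \<Rightarrow> (nat \<Rightarrow> complex) \<Rightarrow> nat \<Rightarrow> complex" where
  "perm_rep P g x = (\<lambda>n. x (P g n))"

lemma unitary_op_reindex_bij:
  assumes P: "bij P"
  shows "unitary_op (\<lambda>x n. x (P n))"
  unfolding unitary_op_def
proof (intro conjI ballI allI)
  show "(\<lambda>x n. x (P n)) ` l2 = l2"
  proof
    show "(\<lambda>x n. x (P n)) ` l2 \<subseteq> l2" using l2_reindex_bij[OF P] by blast
    show "l2 \<subseteq> (\<lambda>x n. x (P n)) ` l2"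
    proof
      fix y assume "y \<in> l2"
      hence "(\<lambda>n. y (Hilbert_Choice.inv P n)) \<in> l2" by (rule l2_reindex_bij[OF bij_imp_bij_inv[OF P]])
      thus "y \<in> (\<lambda>x n. x (P n)) ` l2" by (rule rev_image_eqI) (simp add: P bij_is_inj)
    qed
  qed
  fix x y assume "x \<in> l2" "y \<in> l2"
  thus "l2_inner (\<lambda>n. x (P n)) (\<lambda>n. y (P n)) = l2_inner x y"
    unfolding l2_inner_def by (rule suminf_reindex_bij[OF P summable_norm_mult_cnj_l2])
qed simp

lemma unitary_rep_perm_rep:
  assumes bij: "\<And>g. g \<in> carrier G \<Longrightarrow> bij (P g)"
    and mult: "\<And>g h n. g \<in> carrier G \<Longrightarrow> h \<in> carrier G \<Longrightarrow> P (g \<otimes>\<^bsub>G\<^esub> h) n = P h (P g n)"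
    and one: "\<And>n. P \<one>\<^bsub>G\<^esub> n = n"
  shows "unitary_rep G (perm_rep P)"
  unfolding unitary_rep_def perm_rep_def
  using unitary_op_reindex_bij[OF bij] by (simp add: mult one)

text \<open>Constants are fixed by \<open>perm_rep P\<close>, so adding a homomorphism \<open>\<chi>\<close> to the formal
  coboundary of \<open>F\<close> keeps the cocycle identity, and may make it square summable although
  \<open>F\<close> is not.\<close>

lemma cocycle_perm_rep:
  assumes mult: "\<And>g h n. g \<in> carrier G \<Longrightarrow> h \<in> carrier G \<Longrightarrow> P (g \<otimes>\<^bsub>G\<^esub> h) n = P h (P g n)"
    and hom: "\<And>g h. g \<in> carrier G \<Longrightarrow> h \<in> carrier G \<Longrightarrow> \<chi> (g \<otimes>\<^bsub>G\<^esub> h) = \<chi> g + \<chi> h"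
    and l2: "\<And>g. g \<in> carrier G \<Longrightarrow> (\<lambda>n. F (P g n) - F n + \<chi> g) \<in> l2"
  shows "cocycle G (perm_rep P) (\<lambda>g n. F (P g n) - F n + \<chi> g)"
  unfolding cocycle_def perm_rep_def by (simp add: l2 mult hom) (simp add: fun_eq_iff algebra_simps)

lemma not_in_closure_coboundaries_perm_rep:
  assumes g: "g \<in> carrier G" and P: "bij (P g)" and fixed: "P g k = k"
    and b: "b g \<in> l2" and nonzero: "b g k \<noteq> 0"
  shows "\<not> in_closure_coboundaries G (perm_rep P) b"
proof
  assume closure: "in_closure_coboundaries G (perm_rep P) b"
  have "finite {g} \<and> {g} \<subseteq> carrier G \<and> cmod (b g k) > 0" using g nonzero by simp
  then obtain v where v: "v \<in> l2"
    and close: "l2_norm (\<lambda>n. b g n - coboundary (perm_rep P) v g n) < cmod (b g k)"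
    using closure unfolding in_closure_coboundaries_def by blast
  have "coboundary (perm_rep P) v g \<in> l2"
    unfolding coboundary_def perm_rep_def by (rule l2_diff[OF l2_reindex_bij[OF P v] v])
  hence "cmod (b g k - coboundary (perm_rep P) v g k)
           \<le> l2_norm (\<lambda>n. b g n - coboundary (perm_rep P) v g n)"
    by (rule l2_norm_ge_component[OF l2_diff[OF b]])
  moreover have "coboundary (perm_rep P) v g k = 0"
    by (simp add: coboundary_def perm_rep_def fixed)
  ultimately show False using close by simp
qed

definition fun_scale :: "complex \<Rightarrow> (nat \<Rightarrow> complex) \<Rightarrow> nat \<Rightarrow> complex" where
  "fun_scale c x = (\<lambda>n. c * x n)"

interpretation fun_cvs: vector_space fun_scale
  by unfold_locales (auto simp: fun_scale_def plus_fun_def ring_distribs)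

lemma sum_fun_apply: "(\<Sum>a\<in>A. F a) n = (\<Sum>a\<in>A. F a n)"
  for F :: "'a \<Rightarrow> nat \<Rightarrow> complex"
  by (induct A rule: infinite_finite_induct) (auto simp: plus_fun_def zero_fun_def)

lemma cspan_subset_span: "cspan S \<subseteq> fun_cvs.span S"
proof
  fix x assume "x \<in> cspan S"
  then obtain c where "x = (\<lambda>n. \<Sum>s\<in>S. c s * s n)" by (auto simp: cspan_def)
  hence "x = (\<Sum>s\<in>S. fun_scale (c s) s)" by (simp add: fun_eq_iff sum_fun_apply fun_scale_def)
  thus "x \<in> fun_cvs.span S" by (simp add: fun_cvs.span_sum fun_cvs.span_scale fun_cvs.span_base)
qed

lemma cspan_base:
  assumes "finite S" and "s \<in> S"
  shows "s \<in> cspan S"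
proof -
  have "(\<lambda>n. \<Sum>t\<in>S. (if t = s then 1 else 0) * t n) = (\<lambda>n. \<Sum>t\<in>S. if t = s then s n else 0)"
    by (intro ext sum.cong) auto
  also have "\<dots> = s" using assms by simp
  finally show ?thesis
    unfolding cspan_def by (intro CollectI exI[of _ "\<lambda>t. if t = s then 1 else 0"]) (rule sym)
qed

lemma independent_delta_diffs:
  assumes "a \<notin> K"
  shows "fun_cvs.independent ((\<lambda>k n. of_bool (n = a) - of_bool (n = k)) ` K)"
    (is "fun_cvs.independent (?e ` K)")
  unfolding fun_cvs.independent_explicit_module
proof (intro allI impI)
  fix T u v assume T: "finite T" "T \<subseteq> ?e ` K"
    and sum0: "(\<Sum>w\<in>T. fun_scale (u w) w) = 0" and vT: "v \<in> T"
  obtain k where k: "k \<in> K" and v: "v = ?e k" using vT T(2) by blast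
  have ek: "?e j k = - of_bool (j = k)" if "j \<in> K" for j
    using that k assms by auto
  have "0 = (\<Sum>w\<in>T. u w * w k)"
    using fun_cong[OF sum0, of k] by (simp add: sum_fun_apply fun_scale_def)
  also have "\<dots> = u v * v k + (\<Sum>w\<in>T - {v}. u w * w k)"
    using T(1) vT by (simp add: sum.remove)
  also have "(\<Sum>w\<in>T - {v}. u w * w k) = 0"
  proof (rule sum.neutral, rule ballI)
    fix w assume w: "w \<in> T - {v}"
    then obtain j where "j \<in> K" "w = ?e j" using T(2) by blast
    thus "u w * w k = 0" using w v ek by auto
  qed
  finally show "u v = 0" using v ek[OF k] by simp
qed

lemma inj_on_delta_diffs:
  assumes "a \<notin> K"
  shows "inj_on (\<lambda>k n. of_bool (n = a) - of_bool (n = k) :: complex) K"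
proof (rule inj_onI)
  fix k l assume "k \<in> K" and eq: "(\<lambda>n. of_bool (n = a) - of_bool (n = k) :: complex)
                                       = (\<lambda>n. of_bool (n = a) - of_bool (n = l))"
  from fun_cong[OF eq, of k] show "k = l" using assms \<open>k \<in> K\<close> by (auto split: if_splits)
qed

lemma perm_rep_no_fd_subrep:
  assumes transp: "\<And>a b. a \<noteq> b \<Longrightarrow> \<exists>g\<in>carrier G. P g = transpose a b"
  shows "\<not> has_fd_subrep G (perm_rep P)"
proof
  assume "has_fd_subrep G (perm_rep P)"
  then obtain S f where fin: "finite S" and "S \<subseteq> l2" and fS: "f \<in> S"
    and nonzero: "f \<noteq> (\<lambda>n. 0)"
    and invariant: "\<And>g x. g \<in> carrier G \<Longrightarrow> x \<in> cspan S \<Longrightarrow> perm_rep P g x \<in> cspan S"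
    unfolding has_fd_subrep_def by blast
  obtain a where fa: "f a \<noteq> 0" using nonzero by auto
  have "f \<in> l2" using fS \<open>S \<subseteq> l2\<close> by blast
  define Q where "Q = {n. f n = f a}"
  define e where "e k = (\<lambda>n. of_bool (n = a) - of_bool (n = k) :: complex)" for k
  have "finite Q" unfolding Q_def by (rule l2_finite_level_set) fact+
  have aQ: "a \<in> Q" by (simp add: Q_def)
  have fc: "f \<in> cspan S" by (rule cspan_base[OF fin fS])
  have e_span: "e k \<in> fun_cvs.span S" if k: "k \<notin> Q" for k
  proof -
    have "k \<noteq> a" "f k \<noteq> f a" using k aQ by (auto simp: Q_def)
    then obtain g where "g \<in> carrier G" and Pg: "P g = transpose a k" using transp by metis
    hence "perm_rep P g f \<in> fun_cvs.span S" using invariant fc cspan_subset_span by blast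
    moreover have "f \<in> fun_cvs.span S" using fc cspan_subset_span by blast
    moreover have "e k = fun_scale (1 / (f k - f a)) (perm_rep P g f - f)"
      using \<open>k \<noteq> a\<close> \<open>f k \<noteq> f a\<close>
      by (auto simp: fun_eq_iff e_def perm_rep_def Pg fun_scale_def transpose_def field_simps)
    ultimately show ?thesis by (simp add: fun_cvs.span_scale fun_cvs.span_diff)
  qed
  have "fun_cvs.independent (e ` (- Q))"
    unfolding e_def by (rule independent_delta_diffs) (simp add: aQ)
  hence "finite (e ` (- Q))"
    using fun_cvs.independent_span_bound[OF fin] e_span by blast
  moreover have "inj_on e (- Q)"
    unfolding e_def by (rule inj_on_delta_diffs) (simp add: aQ)
  ultimately have "finite (- Q)" by (simp add: finite_image_iff)
  thus False using \<open>finite Q\<close> by (simp add: Compl_eq_Diff_UNIV Diff_infinite_finite)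
qed

lemma carrier_SymZ_rtimes_Z: "carrier SymZ_rtimes_Z = fin_perm_Z \<times> UNIV"
  by (simp add: SymZ_rtimes_Z_def)

lemma mult_SymZ_rtimes_Z: "(\<sigma>, m) \<otimes>\<^bsub>SymZ_rtimes_Z\<^esub> (\<tau>, n) = (\<sigma> \<circ> shift_conj m \<tau>, m + n)"
  by (simp add: SymZ_rtimes_Z_def)

lemma one_SymZ_rtimes_Z: "\<one>\<^bsub>SymZ_rtimes_Z\<^esub> = (id, 0)"
  by (simp add: SymZ_rtimes_Z_def)

lemma transpose_in_carrier_SymZ_rtimes_Z: "(transpose a b, m) \<in> carrier SymZ_rtimes_Z"
proof -
  have "{x. transpose a b x \<noteq> x} \<subseteq> {a, b}" by (auto simp: transpose_def)
  hence "finite {x. transpose a b x \<noteq> x}" by (rule finite_subset) simp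
  thus ?thesis by (simp add: carrier_SymZ_rtimes_Z fin_perm_Z_def)
qed

lemma shift_conj_eq_comp: "shift_conj m \<tau> = (\<lambda>x. x + m) \<circ> \<tau> \<circ> (\<lambda>x. x - m)"
  by (auto simp: shift_conj_def)

lemma bij_shift_conj: "bij \<tau> \<Longrightarrow> bij (shift_conj m \<tau>)"
  by (simp add: shift_conj_eq_comp bij_comp bij_plus_right bij_diff_right)

lemma inv_shift_conj:
  assumes "bij \<tau>"
  shows "Hilbert_Choice.inv (shift_conj m \<tau>) y = Hilbert_Choice.inv \<tau> (y - m) + m"
proof (rule inv_f_eq)
  show "inj (shift_conj m \<tau>)" using bij_shift_conj[OF assms] by (rule bij_is_inj)
  show "shift_conj m \<tau> (Hilbert_Choice.inv \<tau> (y - m) + m) = y"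
    using assms by (simp add: shift_conj_def bij_is_surj surj_f_inv_f)
qed

text \<open>\<open>(\<sigma>, m)\<close> acts on \<open>\<int>\<close> by \<open>x \<mapsto> \<sigma> (x + m)\<close>; \<open>inv_act g\<close> is the action of \<open>g\<inverse>\<close>, so that
  \<open>inv_act\<close> is a right action, as needed for \<open>perm_rep\<close>.\<close>

definition inv_act :: "(int \<Rightarrow> int) \<times> int \<Rightarrow> int \<Rightarrow> int" where
  "inv_act g y = Hilbert_Choice.inv (fst g) y - snd g"

lemma inv_act_mult:
  assumes "g \<in> carrier SymZ_rtimes_Z" and "h \<in> carrier SymZ_rtimes_Z"
  shows "inv_act (g \<otimes>\<^bsub>SymZ_rtimes_Z\<^esub> h) y = inv_act h (inv_act g y)"
proof -
  obtain \<sigma> m \<tau> n where g: "g = (\<sigma>, m)" and h: "h = (\<tau>, n)" by fastforce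
  have "bij \<sigma>" "bij \<tau>" using assms g h by (auto simp: carrier_SymZ_rtimes_Z fin_perm_Z_def)
  hence "Hilbert_Choice.inv (\<sigma> \<circ> shift_conj m \<tau>)
           = Hilbert_Choice.inv (shift_conj m \<tau>) \<circ> Hilbert_Choice.inv \<sigma>"
    by (simp add: o_inv_distrib bij_shift_conj)
  thus ?thesis using \<open>bij \<tau>\<close> by (simp add: g h mult_SymZ_rtimes_Z inv_act_def inv_shift_conj)
qed

definition inv_act_nat :: "(int \<Rightarrow> int) \<times> int \<Rightarrow> nat \<Rightarrow> nat" where
  "inv_act_nat g n = int_encode (inv_act g (int_decode n))"

lemma bij_inv_act_nat:
  assumes "g \<in> carrier SymZ_rtimes_Z"
  shows "bij (inv_act_nat g)"
proof -
  obtain \<sigma> m where g: "g = (\<sigma>, m)" by fastforce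
  have "bij (Hilbert_Choice.inv \<sigma>)" using assms g by (auto simp: carrier_SymZ_rtimes_Z fin_perm_Z_def bij_imp_bij_inv)
  hence "bij (int_encode \<circ> (\<lambda>x. x - m) \<circ> Hilbert_Choice.inv \<sigma> \<circ> int_decode)"
    by (simp add: bij_comp bij_int_encode bij_int_decode bij_diff_right)
  moreover have "inv_act_nat g = int_encode \<circ> (\<lambda>x. x - m) \<circ> Hilbert_Choice.inv \<sigma> \<circ> int_decode"
    by (auto simp: inv_act_nat_def inv_act_def g)
  ultimately show ?thesis by simp
qed

lemma inv_act_nat_mult:
  "g \<in> carrier SymZ_rtimes_Z \<Longrightarrow> h \<in> carrier SymZ_rtimes_Z \<Longrightarrow>
    inv_act_nat (g \<otimes>\<^bsub>SymZ_rtimes_Z\<^esub> h) n = inv_act_nat h (inv_act_nat g n)"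
  by (simp add: inv_act_nat_def inv_act_mult)

lemma inv_act_nat_one: "inv_act_nat (\<one>\<^bsub>SymZ_rtimes_Z\<^esub>) n = n"
  by (simp add: inv_act_nat_def inv_act_def one_SymZ_rtimes_Z)

lemma inv_act_nat_transpose:
  "inv_act_nat (transpose (int_decode a) (int_decode b), 0) = transpose a b"
  by (auto simp: fun_eq_iff inv_act_nat_def inv_act_def transpose_def int_decode_eq)

definition zeta :: "int \<Rightarrow> int" where
  "zeta x = (if x \<ge> 1 then x - 1 else x)"

definition zeta_cocycle :: "(int \<Rightarrow> int) \<times> int \<Rightarrow> nat \<Rightarrow> complex" where
  "zeta_cocycle g n = of_int (zeta (inv_act g (int_decode n)) - zeta (int_decode n) + snd g)"

lemma zeta_cocycle_eq_coboundary:
  "zeta_cocycle = (\<lambda>g n. of_int (zeta (int_decode (inv_act_nat g n))) - of_int (zeta (int_decode n))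
                           + of_int (snd g))"
  by (simp add: fun_eq_iff zeta_cocycle_def inv_act_nat_def)

lemma snd_mult_SymZ_rtimes_Z: "snd (g \<otimes>\<^bsub>SymZ_rtimes_Z\<^esub> h) = snd g + snd h"
  by (cases g, cases h) (simp add: mult_SymZ_rtimes_Z)

lemma zeta_cocycle_l2:
  assumes g: "g \<in> carrier SymZ_rtimes_Z"
  shows "zeta_cocycle g \<in> l2"
proof -
  obtain \<sigma> m where gg: "g = (\<sigma>, m)" by fastforce
  have "bij \<sigma>" and "finite {x. \<sigma> x \<noteq> x}"
    using g gg by (auto simp: carrier_SymZ_rtimes_Z fin_perm_Z_def)
  define A where "A = {x. \<sigma> x \<noteq> x} \<union> {-\<bar>m\<bar>..\<bar>m\<bar>}"
  have "finite A" using \<open>finite {x. \<sigma> x \<noteq> x}\<close> by (simp add: A_def)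
  have "zeta_cocycle g n = 0" if "n \<notin> int_encode ` A" for n
  proof -
    have "int_decode n \<notin> A" using that by (metis image_eqI int_decode_inverse)
    hence "Hilbert_Choice.inv \<sigma> (int_decode n) = int_decode n" and "\<bar>int_decode n\<bar> > \<bar>m\<bar>"
      using \<open>bij \<sigma>\<close> by (auto simp: A_def bij_is_inj inv_f_eq)
    thus ?thesis by (auto simp: zeta_cocycle_def inv_act_def gg zeta_def)
  qed
  hence "summable (\<lambda>n. (cmod (zeta_cocycle g n))\<^sup>2)"
    using \<open>finite A\<close> by (intro summable_finite[of "int_encode ` A"]) auto
  thus ?thesis by (simp add: l2_def)
qed

theorem proposition4p4:
  shows "\<not> has_HFD_l2 SymZ_rtimes_Z"
proof -
  let ?\<pi> = "perm_rep inv_act_nat"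
  have "unitary_rep SymZ_rtimes_Z ?\<pi>"
    by (intro unitary_rep_perm_rep bij_inv_act_nat inv_act_nat_mult inv_act_nat_one)
  moreover have "cocycle SymZ_rtimes_Z ?\<pi> zeta_cocycle"
    unfolding zeta_cocycle_eq_coboundary
    by (rule cocycle_perm_rep[OF inv_act_nat_mult])
       (simp_all add: snd_mult_SymZ_rtimes_Z zeta_cocycle_l2[unfolded zeta_cocycle_eq_coboundary])
  moreover have "\<not> in_closure_coboundaries SymZ_rtimes_Z ?\<pi> zeta_cocycle"
  proof (rule not_in_closure_coboundaries_perm_rep)
    let ?g = "(transpose 0 1, 1) :: (int \<Rightarrow> int) \<times> int"
    show "?g \<in> carrier SymZ_rtimes_Z" by (rule transpose_in_carrier_SymZ_rtimes_Z)
    thus "bij (inv_act_nat ?g)" "zeta_cocycle ?g \<in> l2" by (rule bij_inv_act_nat, rule zeta_cocycle_l2)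
    show "inv_act_nat ?g (int_encode 0) = int_encode 0" by (simp add: inv_act_nat_def inv_act_def)
    show "zeta_cocycle ?g (int_encode 0) \<noteq> 0" by (simp add: zeta_cocycle_def inv_act_def zeta_def)
  qed
  moreover have "\<not> has_fd_subrep SymZ_rtimes_Z ?\<pi>"
    by (rule perm_rep_no_fd_subrep) (metis inv_act_nat_transpose transpose_in_carrier_SymZ_rtimes_Z)
  ultimately show ?thesis unfolding has_HFD_l2_def reduced_H1_nonzero_def by blast
qed

end
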